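(* Let $N\ge1$, $f:\mathbb{N}^N\to\mathbb{N}$, $p$ a prime, $k\ge0$ and $\boldsymbol{\ell}\in\mathbb{N}^N$. Write $k=k_0+k_1p$ with $0\le k_0<p$, and $\boldsymbol{\ell}=\boldsymbol{\ell}_0+p\mathbf{x}$ with $\mathbf{x}\in\mathbb{N}^N$ and every entry of $\boldsymbol{\ell}_0$ in $\{0,\dots,p-1\}$. Then $$\binom{k}{\boldsymbol{\ell}}_f\equiv\sum_{\mathbf{m}\in\mathbb{N}^N}\binom{k_1}{\mathbf{x}-\mathbf{m}}_f\binom{k_0}{\boldsymbol{\ell}_0+p\mathbf{m}}_f\pmod p.$$
   Context: $\mathbb{N}=\{0,1,2,\dots\}$. For $k\ge0$ and $\mathbf{y}\in\mathbb{Z}^N$, $\binom{k}{\mathbf{y}}_f=\sum_{\mathbf{m}_1+\cdots+\mathbf{m}_k=\mathbf{y}} f(\mathbf{m}_1)\cdots f(\mathbf{m}_k)$ over tuples of vectors in $\mathbb{N}^N$ (in particular it is $0$ if $\mathbf{y}$ has a negative entry). *)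

theory Defs
  imports "HOL-Library.Groups_Big_Fun" "HOL-Number_Theory.Cong"
begin

text \<open>Vectors in N^N / Z^N are functions from a finite index type 'n (|'n| = N >= 1).\<close>
definition gbinom :: "(('n::finite \<Rightarrow> nat) \<Rightarrow> nat) \<Rightarrow> nat \<Rightarrow> ('n \<Rightarrow> int) \<Rightarrow> nat" where
  "gbinom f k y =
     (\<Sum>ms \<in> {ms. length ms = k \<and> (\<lambda>j. \<Sum>m\<leftarrow>ms. int (m j)) = y}. prod_list (map f ms))"

end

theory Submission
  imports Defs "HOL-Number_Theory.Residues" "HOL-Combinatorics.Multiset_Permutations"
    "HOL-Library.FuncSet"
begin

text \<open>
  binom(k, y)_f is the coefficient of X^y in F^k, where F = \<Sum>m. f(m) X^m. Modulo p the
  Frobenius congruence F^p \<equiv> F(X^p) holds, so F^(k0 + p k1) \<equiv> F^k0 \<cdot> F^k1(X^p), and comparing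
  coefficients of X^l with l = l0 + p x gives the claim. On coefficients, F^p \<equiv> F(X^p) because
  the p-tuples summing to y fall into multiset classes whose sizes are multinomial coefficients,
  divisible by p except for the constant tuples, which contribute f(y/p)^p \<equiv> f(y/p).
\<close>

lemma finite_atMost_fun: "finite {..y :: 'n::finite \<Rightarrow> nat}"
proof -
  have "{..y} = Pi\<^sub>E UNIV (\<lambda>j. {..y j})"
    by (auto simp: le_fun_def PiE_def Pi_def extensional_def)
  then show ?thesis by (simp add: finite_PiE)
qed

lemma fermat_little_nat:
  fixes p a :: nat
  assumes "prime p"
  shows "[a ^ p = a] (mod p)"
proof (cases "p dvd a")
  case True
  moreover have "p dvd a ^ p"
    using True assms by (meson dvd_power dvd_trans prime_gt_0_nat)
  ultimately show ?thesis
    by (simp add: cong_def)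
next
  case False
  have "[a * a ^ (p - 1) = a * 1] (mod p)"
    by (rule cong_scalar_left, rule fermat_theorem[OF assms False])
  moreover have "a * a ^ (p - 1) = a ^ p"
    using assms by (simp add: prime_gt_0_nat power_eq_if)
  ultimately show ?thesis by simp
qed

lemma prime_dvd_card_permutations_of_multiset:
  assumes p: "prime p" and size: "size M = p" and not_const: "\<And>x. M \<noteq> replicate_mset p x"
  shows "p dvd card (permutations_of_multiset M)"
proof -
  have count_less: "count M x < p" for x
  proof (rule ccontr)
    assume "\<not> count M x < p"
    then have "replicate_mset p x \<subseteq># M"
      by (simp add: count_le_replicate_mset_subset_eq[symmetric] not_less)
    then have "M = replicate_mset p x"
      using size by (metis mset_subset_size size_replicate_mset subset_mset.le_less less_irrefl)
    with not_const show False by blast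
  qed
  have "\<not> p dvd (\<Prod>x\<in>set_mset M. fact (count M x))"
    using count_less by (simp add: prime_dvd_prod_iff[OF finite_set_mset p] prime_dvd_fact_iff[OF p] not_le)
  moreover have "p dvd card (permutations_of_multiset M) * (\<Prod>x\<in>set_mset M. fact (count M x))"
    by (simp add: card_permutations_of_multiset_aux size prime_dvd_fact_iff[OF p])
  ultimately show ?thesis
    using prime_dvd_mult_iff[OF p] by blast
qed

definition vsum :: "('n \<Rightarrow> nat) list \<Rightarrow> 'n \<Rightarrow> nat" where
  "vsum ms = (\<lambda>j. \<Sum>m\<leftarrow>ms. m j)"

definition compositions :: "nat \<Rightarrow> ('n \<Rightarrow> nat) \<Rightarrow> ('n \<Rightarrow> nat) list set" where
  "compositions k y = {ms. length ms = k \<and> vsum ms = y}"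

lemma vsum_append: "vsum (us @ ws) = (\<lambda>j. vsum us j + vsum ws j)"
  by (simp add: vsum_def)

lemma vsum_replicate: "vsum (replicate n z) = (\<lambda>j. n * z j)"
  by (simp add: vsum_def sum_list_replicate)

lemma vsum_mset_eq: "mset ms = mset ms' \<Longrightarrow> vsum ms = vsum ms'"
proof -
  assume "mset ms = mset ms'"
  then have "(\<Sum>m\<leftarrow>ms. m j) = (\<Sum>m\<leftarrow>ms'. m j)" for j
    by (metis mset_map sum_mset_sum_list)
  then show ?thesis by (simp add: vsum_def)
qed

lemma member_le_vsum: "m \<in> set ms \<Longrightarrow> m \<le> vsum ms"
  by (induction ms) (auto simp: vsum_def le_fun_def trans_le_add2)

lemma finite_compositions: "finite (compositions k (y :: 'n::finite \<Rightarrow> nat))"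
proof -
  have "compositions k y \<subseteq> {ms. set ms \<subseteq> {..y} \<and> length ms = k}"
    using member_le_vsum by (fastforce simp: compositions_def)
  then show ?thesis
    using finite_lists_length_eq[OF finite_atMost_fun] finite_subset by blast
qed

lemma compositions_add:
  "compositions (a + b) y
     = (\<lambda>(w, us, ws). us @ ws) ` Sigma {..y} (\<lambda>w. compositions a w \<times> compositions b (\<lambda>j. y j - w j))"
    (is "_ = ?concat ` ?S")
proof (intro Set.set_eqI iffI)
  fix ms assume ms: "ms \<in> compositions (a + b) y"
  have y: "y = (\<lambda>j. vsum (take a ms) j + vsum (drop a ms) j)"
    using ms vsum_append[of "take a ms" "drop a ms"] by (simp add: compositions_def)
  have "(vsum (take a ms), take a ms, drop a ms) \<in> ?S"
    using ms by (subst (1 2) y) (auto simp: compositions_def le_fun_def)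
  then show "ms \<in> ?concat ` ?S"
    by (rule rev_image_eqI) simp
qed (auto simp: compositions_def le_fun_def vsum_append)

definition gbinom_nat :: "(('n::finite \<Rightarrow> nat) \<Rightarrow> nat) \<Rightarrow> nat \<Rightarrow> ('n \<Rightarrow> nat) \<Rightarrow> nat" where
  "gbinom_nat f k y = (\<Sum>ms\<in>compositions k y. prod_list (map f ms))"

lemma gbinom_eq_gbinom_nat:
  "gbinom f k y = (if \<forall>j. 0 \<le> y j then gbinom_nat f k (\<lambda>j. nat (y j)) else 0)"
proof -
  have int_vsum: "(\<lambda>j. \<Sum>m\<leftarrow>ms. int (m j)) = (\<lambda>j. int (vsum ms j))" for ms :: "('n \<Rightarrow> nat) list"
    by (simp add: vsum_def sum_list_of_nat[symmetric] o_def)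
  have "{ms. length ms = k \<and> (\<lambda>j. \<Sum>m\<leftarrow>ms. int (m j)) = y}
      = (if \<forall>j. 0 \<le> y j then compositions k (\<lambda>j. nat (y j)) else {})"
    by (auto simp: compositions_def int_vsum fun_eq_iff) (metis nat_int of_nat_0_le_iff)+
  then show ?thesis by (simp add: gbinom_def gbinom_nat_def)
qed

lemma gbinom_of_nat: "gbinom f k (\<lambda>j. int (y j)) = gbinom_nat f k y"
  by (simp add: gbinom_eq_gbinom_nat)

lemma gbinom_diff:
  "gbinom f k (\<lambda>j. int (x j) - int (m j)) = (if m \<le> x then gbinom_nat f k (\<lambda>j. x j - m j) else 0)"
  by (simp add: gbinom_eq_gbinom_nat le_fun_def nat_minus_as_int)

lemma gbinom_nat_0: "gbinom_nat f 0 y = (if y = (\<lambda>j. 0) then 1 else 0)"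
proof -
  have "compositions 0 y = (if y = (\<lambda>j. 0) then {[]} else {})"
    by (auto simp: compositions_def vsum_def)
  then show ?thesis by (simp add: gbinom_nat_def)
qed

lemma gbinom_nat_1: "gbinom_nat f 1 y = f y"
proof -
  have "compositions 1 y = {[y]}"
    by (auto simp: compositions_def vsum_def length_Suc_conv)
  then show ?thesis by (simp add: gbinom_nat_def)
qed

lemma gbinom_nat_add:
  "gbinom_nat f (a + b) y = (\<Sum>w\<in>{..y}. gbinom_nat f a w * gbinom_nat f b (\<lambda>j. y j - w j))"
proof -
  let ?S = "Sigma {..y} (\<lambda>w. compositions a w \<times> compositions b (\<lambda>j. y j - w j))"
  have inj: "inj_on (\<lambda>(w, us, ws). us @ ws) ?S"
    by (auto simp: inj_on_def compositions_def append_eq_append_conv)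
  have "(\<Sum>w\<in>{..y}. gbinom_nat f a w * gbinom_nat f b (\<lambda>j. y j - w j))
      = (\<Sum>(w, us, ws)\<in>?S. prod_list (map f (us @ ws)))"
    by (simp add: gbinom_nat_def sum_product sum.cartesian_product sum.Sigma
        finite_atMost_fun finite_compositions case_prod_beta)
  also have "\<dots> = gbinom_nat f (a + b) y"
    unfolding gbinom_nat_def compositions_add sum.reindex[OF inj] by (simp add: case_prod_beta)
  finally show ?thesis by simp
qed

lemma gbinom_nat_Suc:
  "gbinom_nat f (Suc k) y = (\<Sum>w\<in>{..y}. gbinom_nat f k w * f (\<lambda>j. y j - w j))"
  using gbinom_nat_add[of f k 1 y] by (simp only: gbinom_nat_1 Suc_eq_plus1)

lemma gbinom_nat_mult: "gbinom_nat f (a * c) y = gbinom_nat (gbinom_nat f a) c y"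
proof (induction c arbitrary: y)
  case 0
  then show ?case by (simp add: gbinom_nat_0)
next
  case (Suc c)
  then show ?case
    by (simp add: gbinom_nat_Suc gbinom_nat_add[of f "a * c" a, simplified add.commute] add.commute)
qed

lemma gbinom_nat_cong:
  assumes "\<And>v. [f v = g v] (mod p)"
  shows "[gbinom_nat f k y = gbinom_nat g k y] (mod p)"
proof (induction k arbitrary: y)
  case 0
  then show ?case by (simp add: gbinom_nat_0)
next
  case (Suc k)
  then show ?case
    unfolding gbinom_nat_Suc by (intro cong_sum cong_mult assms)
qed

lemma gbinom_nat_eq_sum_multisets:
  "gbinom_nat f k y
     = (\<Sum>M\<in>mset ` compositions k y. card (permutations_of_multiset M) * prod_mset (image_mset f M))"
proof -
  have classes: "{ms\<in>compositions k y. mset ms = M} = permutations_of_multiset M"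
    if "M \<in> mset ` compositions k y" for M
    using that by (auto simp: permutations_of_multiset_def compositions_def
        dest: mset_eq_length vsum_mset_eq)
  have class_sum: "(\<Sum>ms\<in>permutations_of_multiset M. prod_list (map f ms))
      = card (permutations_of_multiset M) * prod_mset (image_mset f M)" for M
  proof -
    have "prod_list (map f ms) = prod_mset (image_mset f M)" if "ms \<in> permutations_of_multiset M" for ms
      using permutations_of_multisetD[OF that] by (metis mset_map prod_mset_prod_list)
    then show ?thesis by simp
  qed
  have "gbinom_nat f k y
      = (\<Sum>M\<in>mset ` compositions k y. \<Sum>ms\<in>{ms\<in>compositions k y. mset ms = M}. prod_list (map f ms))"
    unfolding gbinom_nat_def by (rule sum.image_gen[OF finite_compositions])
  also have "\<dots> = (\<Sum>M\<in>mset ` compositions k y.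
                     card (permutations_of_multiset M) * prod_mset (image_mset f M))"
    by (intro sum.cong refl) (simp add: classes class_sum)
  finally show ?thesis .
qed

text \<open>If g is the coefficient function of a series G, then dilate p g is that of G(X^p).\<close>

definition dilate :: "nat \<Rightarrow> (('n \<Rightarrow> nat) \<Rightarrow> 'a::zero) \<Rightarrow> ('n \<Rightarrow> nat) \<Rightarrow> 'a" where
  "dilate p g y = (if \<forall>j. p dvd y j then g (\<lambda>j. y j div p) else 0)"

lemma replicate_mset_in_compositions_iff:
  "replicate_mset n z \<in> mset ` compositions n y \<longleftrightarrow> y = (\<lambda>j. n * z j)"
proof
  assume "replicate_mset n z \<in> mset ` compositions n y"
  then obtain ms where "ms \<in> compositions n y" "mset ms = mset (replicate n z)"
    by auto
  then show "y = (\<lambda>j. n * z j)"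
    by (metis (mono_tags, lifting) compositions_def mem_Collect_eq vsum_mset_eq vsum_replicate)
next
  assume "y = (\<lambda>j. n * z j)"
  then have "replicate n z \<in> compositions n y"
    by (simp add: compositions_def vsum_replicate)
  then show "replicate_mset n z \<in> mset ` compositions n y"
    by (metis image_eqI mset_replicate)
qed

lemma gbinom_nat_prime_cong:
  assumes p: "prime p"
  shows "[gbinom_nat f p y = dilate p f y] (mod p)"
proof -
  have p0: "p > 0" using p prime_gt_0_nat by blast
  define z where "z = (\<lambda>j. y j div p)"
  have "[gbinom_nat f p y = (\<Sum>M\<in>mset ` compositions p y. if M = replicate_mset p z then f z else 0)] (mod p)"
    unfolding gbinom_nat_eq_sum_multisets
  proof (intro cong_sum)
    fix M assume M: "M \<in> mset ` compositions p y"
    show "[card (permutations_of_multiset M) * prod_mset (image_mset f M)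
           = (if M = replicate_mset p z then f z else 0)] (mod p)"
    proof (cases "\<exists>x. M = replicate_mset p x")
      case True
      then obtain x where x: "M = replicate_mset p x" by blast
      then have "y = (\<lambda>j. p * x j)"
        using M replicate_mset_in_compositions_iff by blast
      then have "x = z" using p0 by (simp add: z_def)
      moreover have "card (permutations_of_multiset M) = 1"
        using card_permutations_of_multiset_aux[of M] p0 by (simp add: x)
      ultimately show ?thesis
        using fermat_little_nat[OF p] by (simp add: x)
    next
      case False
      then show ?thesis
        using prime_dvd_card_permutations_of_multiset[OF p, of M] M
        by (auto simp: cong_def compositions_def)
    qed
  qed
  also have "(\<Sum>M\<in>mset ` compositions p y. if M = replicate_mset p z then f z else 0) = dilate p f y"
  proof -
    have "replicate_mset p z \<in> mset ` compositions p y \<longleftrightarrow> (\<forall>j. p dvd y j)"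
      unfolding replicate_mset_in_compositions_iff z_def
      by (metis dvd_mult_div_cancel dvd_triv_left)
    then show ?thesis
      by (simp add: sum.delta finite_compositions dilate_def z_def)
  qed
  finally show ?thesis .
qed

text \<open>Only the w \<equiv> l (mod p) contribute, and these are w = l0 + p m with m \<le> x.\<close>

lemma sum_mult_dilate:
  fixes h g :: "('n::finite \<Rightarrow> nat) \<Rightarrow> 'a::semiring_0"
  assumes l: "\<And>j. l j = l0 j + p * x j" and l0: "\<And>j. l0 j < p"
  shows "(\<Sum>w\<in>{..l}. h w * dilate p g (\<lambda>j. l j - w j))
       = (\<Sum>m\<in>{..x}. h (\<lambda>j. l0 j + p * m j) * g (\<lambda>j. x j - m j))"
proof -
  have p0: "p > 0"
    using l0[of undefined] by linarith
  let ?S = "{w\<in>{..l}. \<forall>j. p dvd (l j - w j)}"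
  let ?shift = "\<lambda>m j. l0 j + p * m j"
  have shift_diff: "l j - ?shift m j = p * (x j - m j)" if "m \<le> x" for m j
    using l[of j] that by (simp add: le_fun_def diff_mult_distrib2)
  have "?S = ?shift ` {..x}"
  proof (intro Set.set_eqI iffI)
    fix w assume w: "w \<in> ?S"
    have "w j mod p = l0 j" for j
      using w l[of j] l0[of j] by (simp add: le_fun_def) (metis mod_eq_dvd_iff_nat mod_mult_self2 mod_less)
    then have "w = ?shift (\<lambda>j. w j div p)"
      by (simp add: fun_eq_iff) (metis mod_mult_div_eq add.commute)
    moreover have "(\<lambda>j. w j div p) \<in> {..x}"
      using w l l0 p0 div_le_mono[of "w _" "l _" p] by (simp add: le_fun_def)
    ultimately show "w \<in> ?shift ` {..x}" by (rule image_eqI)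
  next
    fix w assume "w \<in> ?shift ` {..x}"
    then show "w \<in> ?S"
      using shift_diff l by (auto simp: le_fun_def)
  qed
  moreover have "inj_on ?shift {..x}"
    using p0 by (auto simp: inj_on_def fun_eq_iff)
  ultimately have "(\<Sum>w\<in>?S. h w * dilate p g (\<lambda>j. l j - w j))
      = (\<Sum>m\<in>{..x}. h (?shift m) * dilate p g (\<lambda>j. l j - ?shift m j))"
    by (simp add: sum.reindex)
  also have "\<dots> = (\<Sum>m\<in>{..x}. h (?shift m) * g (\<lambda>j. x j - m j))"
    using p0 by (intro sum.cong refl) (simp add: shift_diff dilate_def)
  finally show ?thesis
    by (subst sum.mono_neutral_right[OF finite_atMost_fun, of ?S]) (auto simp: dilate_def)
qed

lemma gbinom_nat_dilate:
  assumes p0: "p > 0"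
  shows "gbinom_nat (dilate p f) c y = dilate p (gbinom_nat f c) y"
proof (induction c arbitrary: y)
  case 0
  show ?case
    using p0 by (auto simp: gbinom_nat_0 dilate_def fun_eq_iff dvd_div_eq_0_iff)
next
  case (Suc c)
  have "gbinom_nat (dilate p f) (Suc c) y
      = (\<Sum>w\<in>{..y}. dilate p (gbinom_nat f c) w * dilate p f (\<lambda>j. y j - w j))"
    by (simp add: gbinom_nat_Suc Suc.IH)
  also have "\<dots> = dilate p (gbinom_nat f (Suc c)) y"
  proof (cases "\<forall>j. p dvd y j")
    case True
    have "(\<Sum>w\<in>{..y}. dilate p (gbinom_nat f c) w * dilate p f (\<lambda>j. y j - w j))
        = (\<Sum>m\<in>{..\<lambda>j. y j div p}. dilate p (gbinom_nat f c) (\<lambda>j. 0 + p * m j) * f (\<lambda>j. y j div p - m j))"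
      by (rule sum_mult_dilate) (use True p0 in auto)
    also have "\<dots> = gbinom_nat f (Suc c) (\<lambda>j. y j div p)"
      using p0 by (simp add: dilate_def gbinom_nat_Suc)
    finally show ?thesis
      using True by (simp add: dilate_def)
  next
    case False
    have "dilate p (gbinom_nat f c) w * dilate p f (\<lambda>j. y j - w j) = 0" if "w \<in> {..y}" for w
      using False that by (auto simp: dilate_def le_fun_def) (metis dvd_add le_add_diff_inverse)
    then have "(\<Sum>w\<in>{..y}. dilate p (gbinom_nat f c) w * dilate p f (\<lambda>j. y j - w j)) = 0"
      by (rule sum.neutral[OF ballI])
    moreover have "dilate p (gbinom_nat f (Suc c)) y = 0"
      unfolding dilate_def by (rule if_not_P[OF False])
    ultimately show ?thesis by simp
  qed
  finally show ?case .
qed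

lemma gbinom_nat_mult_prime_cong:
  assumes p: "prime p"
  shows "[gbinom_nat f (p * c) y = dilate p (gbinom_nat f c) y] (mod p)"
proof -
  have "gbinom_nat f (p * c) y = gbinom_nat (gbinom_nat f p) c y"
    by (rule gbinom_nat_mult)
  also have "[\<dots> = gbinom_nat (dilate p f) c y] (mod p)"
    by (intro gbinom_nat_cong gbinom_nat_prime_cong p)
  also have "gbinom_nat (dilate p f) c y = dilate p (gbinom_nat f c) y"
    using p by (simp add: gbinom_nat_dilate prime_gt_0_nat)
  finally show ?thesis .
qed

theorem theorem14:
  fixes f :: "('n::finite \<Rightarrow> nat) \<Rightarrow> nat"
    and p k k0 k1 :: nat
    and l l0 x :: "'n \<Rightarrow> nat"
  assumes "prime p"
    and "k = k0 + k1 * p" and "k0 < p"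
    and "\<And>j. l j = l0 j + p * x j" and "\<And>j. l0 j < p"
  shows "[gbinom f k (\<lambda>j. int (l j))
          = Sum_any (\<lambda>m :: 'n \<Rightarrow> nat.
              gbinom f k1 (\<lambda>j. int (x j) - int (m j)) *
              gbinom f k0 (\<lambda>j. int (l0 j) + int p * int (m j)))] (mod p)"
proof -
  have gbinom_shift:
    "gbinom f k0 (\<lambda>j. int (l0 j) + int p * int (m j)) = gbinom_nat f k0 (\<lambda>j. l0 j + p * m j)" for m :: "'n \<Rightarrow> nat"
    using gbinom_of_nat[of f k0 "\<lambda>j. l0 j + p * m j"] by simp
  have reindexed: "(\<Sum>w\<in>{..l}. gbinom_nat f k0 w * dilate p (gbinom_nat f k1) (\<lambda>j. l j - w j))
      = Sum_any (\<lambda>m. gbinom f k1 (\<lambda>j. int (x j) - int (m j)) *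
                     gbinom f k0 (\<lambda>j. int (l0 j) + int p * int (m j)))"
    unfolding sum_mult_dilate[OF assms(4,5)] Sum_any.conditionalize[OF finite_atMost_fun]
    by (rule arg_cong[where f = Sum_any]) (simp add: fun_eq_iff gbinom_diff gbinom_shift)
  have expand: "gbinom f k (\<lambda>j. int (l j))
      = (\<Sum>w\<in>{..l}. gbinom_nat f k0 w * gbinom_nat f (p * k1) (\<lambda>j. l j - w j))"
    using gbinom_nat_add[of f k0 "p * k1" l] by (simp add: gbinom_of_nat assms(2) mult.commute)
  show ?thesis
    unfolding expand reindexed[symmetric]
    by (intro cong_sum cong_mult cong_refl gbinom_nat_mult_prime_cong assms(1))
qed

end
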